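(* Let $\alpha:\Sigma^\Delta\to(H_1,V_1)$ and $\beta:\Sigma^\Delta\to(H_2,V_2)$ be surjective morphisms onto finite forest algebras, and suppose the derived forest category $C=D_{\alpha,\beta}$ is locally distributive. Then $C$ divides some finite distributive forest algebra.
   Context: Forest algebras $(H,V)$: $H$ is an additive monoid, $V$ is a monoid acting faithfully on $H$, there are insertion elements $I_h\in V$ with $I_h h'=h+h'$, and every $h$ is of the form $v\cdot 0$. All forest algebras are horizontally commutative and idempotent. We write $h+v$ for $I_h v$. $\Sigma^\Delta=(H_\Sigma,V_\Sigma)$ is the free forest algebra over the finite alphabet $\Sigma$: forests are finite sets of unordered trees, and contexts are forests with one leaf replaced by a hole. $(H,V)$ is distributive if $v(h_1+h_2)=vh_1+vh_2$. Derived forest category $D_{\alpha,\beta}$. Its objects are the elements of $H_2$. For $h,h'\in H_2$, the arrows from $h$ to $h'$ are equivalence classes $[h,p,h']$ of triples with $p\in V_\Sigma$ and $\beta(p)h=h'$, where $(h,p,h')\sim(h,q,h')$ iff $\alpha(ps)=\alpha(qs)$ for all $s\in H_\Sigma$ with $\beta(s)=h$. Composition is $[h_2,p,h_3]\cdot[h_1,q,h_2]=[h_1,pq,h_3]$, with identities $[h,1,h]$. Half-arrows ending at $h$ are pairs $(\alpha(s),h)$ with $s\in H_\Sigma$ and $\beta(s)=h$. Sums of half-arrows are taken componentwise. The action of an arrow on a half-arrow is $[h,p,h']\cdot(h_1,h)=(\alpha(p)h_1,h')$. The sum of an arrow and a half-arrow is $[h,p,h']+(\alpha(s),\beta(s))=[h,\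 p+s,\ h'+\beta(s)]$, where $p+s$ is the context $p$ with the forest $s$ added at top level; sums in the other order are analogous. $C$ is locally distributive if for every object $h$, all half-arrows $x_1,x_2$ ending at $h$, and every arrow $v$ from $h$ to some $h'$, we have $v\cdot(x_1+x_2)=v\cdot x_1+v\cdot x_2$. $C$ divides a forest algebra $(H,V)$ if there exist a nonempty set $K_x\subseteq H$ for each half-arrow $x$ and a nonempty set $K_e\subseteq V$ for each arrow $e$ satisfying the following conditions. Preservation of operations: - $K_fK_e\subseteq K_{fe}$ for composable arrows; - $K_eK_x\subseteq K_{e\cdot x}$ when the arrow $e$ starts at the endpoint of the half-arrow $x$; - $K_x+K_y\subseteq K_{x+y}$; - $K_x+K_f\subseteq K_{x+f}$ and $K_f+K_x\subseteq K_{f+x}$ for half-arrows $x,y$ and arrows $f$. Injectivity: - distinct arrows with the same source and target have disjoint sets; - distinct half-arrows with the same end object have disjoint sets. *)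

theory Defs
  imports Main "HOL-Library.FSet"
begin

record ('h, 'v) forest_algebra =
  hcar :: "'h set"
  vcar :: "'v set"
  hadd :: "'h \<Rightarrow> 'h \<Rightarrow> 'h"
  hzero :: "'h"
  vmul :: "'v \<Rightarrow> 'v \<Rightarrow> 'v"
  vone :: "'v"
  act :: "'v \<Rightarrow> 'h \<Rightarrow> 'h"
  ins :: "'h \<Rightarrow> 'v"

definition forest_algebra :: "('h, 'v) forest_algebra \<Rightarrow> bool" where
  "forest_algebra A \<longleftrightarrow>
     \<comment> \<open>(H,+,0) is a commutative idempotent monoid\<close>
     hzero A \<in> hcar A \<and>
     (\<forall>x\<in>hcar A. \<forall>y\<in>hcar A. hadd A x y \<in> hcar A) \<and>
     (\<forall>x\<in>hcar A. \<forall>y\<in>hcar A. \<forall>z\<in>hcar A. hadd A (hadd A x y) z = hadd A x (hadd A y z)) \<and>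
     (\<forall>x\<in>hcar A. hadd A (hzero A) x = x \<and> hadd A x (hzero A) = x) \<and>
     (\<forall>x\<in>hcar A. \<forall>y\<in>hcar A. hadd A x y = hadd A y x) \<and>
     (\<forall>x\<in>hcar A. hadd A x x = x) \<and>
     \<comment> \<open>(V,\<cdot>,1) is a monoid\<close>
     vone A \<in> vcar A \<and>
     (\<forall>x\<in>vcar A. \<forall>y\<in>vcar A. vmul A x y \<in> vcar A) \<and>
     (\<forall>x\<in>vcar A. \<forall>y\<in>vcar A. \<forall>z\<in>vcar A. vmul A (vmul A x y) z = vmul A x (vmul A y z)) \<and>
     (\<forall>x\<in>vcar A. vmul A (vone A) x = x \<and> vmul A x (vone A) = x) \<and>
     \<comment> \<open>V acts on H (monoid action)\<close>
     (\<forall>v\<in>vcar A. \<forall>h\<in>hcar A. act A v h \<in> hcar A) \<and>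
     (\<forall>h\<in>hcar A. act A (vone A) h = h) \<and>
     (\<forall>v\<in>vcar A. \<forall>w\<in>vcar A. \<forall>h\<in>hcar A. act A (vmul A v w) h = act A v (act A w h)) \<and>
     \<comment> \<open>the action is faithful\<close>
     (\<forall>v\<in>vcar A. \<forall>w\<in>vcar A. (\<forall>h\<in>hcar A. act A v h = act A w h) \<longrightarrow> v = w) \<and>
     \<comment> \<open>insertion elements\<close>
     (\<forall>h\<in>hcar A. ins A h \<in> vcar A \<and> (\<forall>h'\<in>hcar A. act A (ins A h) h' = hadd A h h')) \<and>
     \<comment> \<open>every h is of the form v 0\<close>
     (\<forall>h\<in>hcar A. \<exists>v\<in>vcar A. h = act A v (hzero A))"

definition finite_forest_algebra :: "('h, 'v) forest_algebra \<Rightarrow> bool" where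
  "finite_forest_algebra A \<longleftrightarrow> forest_algebra A \<and> finite (hcar A) \<and> finite (vcar A)"

definition distributive :: "('h, 'v) forest_algebra \<Rightarrow> bool" where
  "distributive A \<longleftrightarrow>
     (\<forall>v\<in>vcar A. \<forall>h1\<in>hcar A. \<forall>h2\<in>hcar A.
        act A v (hadd A h1 h2) = hadd A (act A v h1) (act A v h2))"

text \<open>h + v is I_h v; by horizontal commutativity v + h is the same element.\<close>
definition hvadd :: "('h, 'v) forest_algebra \<Rightarrow> 'h \<Rightarrow> 'v \<Rightarrow> 'v" where
  "hvadd A h v = vmul A (ins A h) v"

definition vhadd :: "('h, 'v) forest_algebra \<Rightarrow> 'v \<Rightarrow> 'h \<Rightarrow> 'v" where
  "vhadd A v h = vmul A (ins A h) v"

text \<open>Unordered trees whose children form a finite set (idempotent, commutative forests).\<close>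
datatype 'a tree = Node 'a "'a tree fset"

type_synonym 'a forest = "'a tree fset"

text \<open>Contexts: a forest with one leaf replaced by a hole.
  CHole F is the context (hole + F); CNode F a c is the context F + a(c).\<close>
datatype 'a ctx = CHole "'a forest" | CNode "'a forest" 'a "'a ctx"

fun plug :: "'a ctx \<Rightarrow> 'a forest \<Rightarrow> 'a forest" where
  "plug (CHole F) s = F |\<union>| s"
| "plug (CNode F a c) s = F |\<union>| {|Node a (plug c s)|}"

fun cadd :: "'a forest \<Rightarrow> 'a ctx \<Rightarrow> 'a ctx" where
  "cadd s (CHole F) = CHole (s |\<union>| F)"
| "cadd s (CNode F a c) = CNode (s |\<union>| F) a c"

fun ccomp :: "'a ctx \<Rightarrow> 'a ctx \<Rightarrow> 'a ctx" where
  "ccomp (CHole F) q = cadd F q"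
| "ccomp (CNode F a c) q = CNode F a (ccomp c q)"

definition cone :: "'a ctx" where "cone = CHole {||}"

definition free_morphism ::
  "('h, 'v) forest_algebra \<Rightarrow> ('a forest \<Rightarrow> 'h) \<Rightarrow> ('a ctx \<Rightarrow> 'v) \<Rightarrow> bool" where
  "free_morphism A fh fv \<longleftrightarrow>
     (\<forall>s. fh s \<in> hcar A) \<and> (\<forall>p. fv p \<in> vcar A) \<and>
     fh {||} = hzero A \<and>
     (\<forall>s t. fh (s |\<union>| t) = hadd A (fh s) (fh t)) \<and>
     fv cone = vone A \<and>
     (\<forall>p q. fv (ccomp p q) = vmul A (fv p) (fv q)) \<and>
     (\<forall>p s. fh (plug p s) = act A (fv p) (fh s)) \<and>
     (\<forall>s. fv (CHole s) = ins A (fh s))"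

definition surj_free_morphism ::
  "('h, 'v) forest_algebra \<Rightarrow> ('a forest \<Rightarrow> 'h) \<Rightarrow> ('a ctx \<Rightarrow> 'v) \<Rightarrow> bool" where
  "surj_free_morphism A fh fv \<longleftrightarrow>
     free_morphism A fh fv \<and> range fh = hcar A \<and> range fv = vcar A"

definition is_arrow ::
  "('h2, 'v2) forest_algebra \<Rightarrow> ('a ctx \<Rightarrow> 'v2) \<Rightarrow> 'h2 \<Rightarrow> 'a ctx \<Rightarrow> 'h2 \<Rightarrow> bool" where
  "is_arrow B bv h p h' \<longleftrightarrow> h \<in> hcar B \<and> act B (bv p) h = h'"

definition arrow_equiv ::
  "('a forest \<Rightarrow> 'h1) \<Rightarrow> ('a forest \<Rightarrow> 'h2) \<Rightarrow> 'h2 \<Rightarrow> 'a ctx \<Rightarrow> 'a ctx \<Rightarrow> bool" where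
  "arrow_equiv ah bh h p q \<longleftrightarrow> (\<forall>s. bh s = h \<longrightarrow> ah (plug p s) = ah (plug q s))"

definition arrow_class ::
  "('a forest \<Rightarrow> 'h1) \<Rightarrow> ('h2, 'v2) forest_algebra \<Rightarrow> ('a forest \<Rightarrow> 'h2) \<Rightarrow> ('a ctx \<Rightarrow> 'v2)
   \<Rightarrow> 'h2 \<Rightarrow> 'a ctx \<Rightarrow> 'h2 \<Rightarrow> ('h2 \<times> 'a ctx \<times> 'h2) set" where
  "arrow_class ah B bh bv h p h' =
     {(h, q, h') | q. is_arrow B bv h q h' \<and> arrow_equiv ah bh h p q}"

definition half_arrows :: "('a forest \<Rightarrow> 'h1) \<Rightarrow> ('a forest \<Rightarrow> 'h2) \<Rightarrow> ('h1 \<times> 'h2) set" where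
  "half_arrows ah bh = range (\<lambda>s. (ah s, bh s))"

definition half_sum ::
  "('h1, 'v1) forest_algebra \<Rightarrow> ('h2, 'v2) forest_algebra \<Rightarrow> 'h1 \<times> 'h2 \<Rightarrow> 'h1 \<times> 'h2 \<Rightarrow> 'h1 \<times> 'h2" where
  "half_sum A B x y = (hadd A (fst x) (fst y), hadd B (snd x) (snd y))"

definition arrow_act ::
  "('h1, 'v1) forest_algebra \<Rightarrow> ('a ctx \<Rightarrow> 'v1) \<Rightarrow> 'h2 \<Rightarrow> 'a ctx \<Rightarrow> 'h2 \<Rightarrow> 'h1 \<times> 'h2 \<Rightarrow> 'h1 \<times> 'h2" where
  "arrow_act A av h p h' x = (act A (av p) (fst x), h')"

definition locally_distributive ::
  "('h1, 'v1) forest_algebra \<Rightarrow> ('h2, 'v2) forest_algebra \<Rightarrow> ('a forest \<Rightarrow> 'h1) \<Rightarrow> ('a ctx \<Rightarrow> 'v1)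
   \<Rightarrow> ('a forest \<Rightarrow> 'h2) \<Rightarrow> ('a ctx \<Rightarrow> 'v2) \<Rightarrow> bool" where
  "locally_distributive A B ah av bh bv \<longleftrightarrow>
     (\<forall>h\<in>hcar B. \<forall>x1\<in>half_arrows ah bh. \<forall>x2\<in>half_arrows ah bh. \<forall>p h'.
        snd x1 = h \<and> snd x2 = h \<and> is_arrow B bv h p h' \<longrightarrow>
        arrow_act A av h p h' (half_sum A B x1 x2) =
        half_sum A B (arrow_act A av h p h' x1) (arrow_act A av h p h' x2))"

text \<open>Division of D_{alpha,beta} by a forest algebra F. Arrows are handled through
  representatives (h,p,h'); the sets K_e depend only on the class arrow_class ... h p h'.\<close>
definition derived_divides ::
  "('h1, 'v1) forest_algebra \<Rightarrow> ('h2, 'v2) forest_algebra \<Rightarrow> ('a forest \<Rightarrow> 'h1) \<Rightarrow> ('a ctx \<Rightarrow> 'v1)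
   \<Rightarrow> ('a forest \<Rightarrow> 'h2) \<Rightarrow> ('a ctx \<Rightarrow> 'v2) \<Rightarrow> ('h, 'v) forest_algebra \<Rightarrow> bool" where
  "derived_divides A B ah av bh bv F \<longleftrightarrow>
    (\<exists>(KH :: 'h1 \<times> 'h2 \<Rightarrow> 'h set) (KV :: ('h2 \<times> 'a ctx \<times> 'h2) set \<Rightarrow> 'v set).
      let cls = arrow_class ah B bh bv in
      \<comment> \<open>nonempty sets in F\<close>
      (\<forall>x\<in>half_arrows ah bh. KH x \<noteq> {} \<and> KH x \<subseteq> hcar F) \<and>
      (\<forall>h p h'. is_arrow B bv h p h' \<longrightarrow> KV (cls h p h') \<noteq> {} \<and> KV (cls h p h') \<subseteq> vcar F) \<and>
      \<comment> \<open>K_f K_e \<subseteq> K_{fe}\<close>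
      (\<forall>h1 h2 h3 p q. is_arrow B bv h2 p h3 \<and> is_arrow B bv h1 q h2 \<longrightarrow>
         (\<forall>f\<in>KV (cls h2 p h3). \<forall>e\<in>KV (cls h1 q h2). vmul F f e \<in> KV (cls h1 (ccomp p q) h3))) \<and>
      \<comment> \<open>K_e K_x \<subseteq> K_{e x}\<close>
      (\<forall>x\<in>half_arrows ah bh. \<forall>p h'. is_arrow B bv (snd x) p h' \<longrightarrow>
         (\<forall>v\<in>KV (cls (snd x) p h'). \<forall>k\<in>KH x.
            act F v k \<in> KH (arrow_act A av (snd x) p h' x))) \<and>
      \<comment> \<open>K_x + K_y \<subseteq> K_{x+y}\<close>
      (\<forall>x\<in>half_arrows ah bh. \<forall>y\<in>half_arrows ah bh.
         (\<forall>k\<in>KH x. \<forall>l\<in>KH y. hadd F k l \<in> KH (half_sum A B x y))) \<and>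
      \<comment> \<open>K_x + K_f \<subseteq> K_{x+f}, with x = (alpha s, beta s) and f = [h,p,h']\<close>
      (\<forall>s h p h'. is_arrow B bv h p h' \<longrightarrow>
         (\<forall>k\<in>KH (ah s, bh s). \<forall>v\<in>KV (cls h p h').
            hvadd F k v \<in> KV (cls h (cadd s p) (hadd B (bh s) h')))) \<and>
      \<comment> \<open>K_f + K_x \<subseteq> K_{f+x}\<close>
      (\<forall>s h p h'. is_arrow B bv h p h' \<longrightarrow>
         (\<forall>k\<in>KH (ah s, bh s). \<forall>v\<in>KV (cls h p h').
            vhadd F v k \<in> KV (cls h (cadd s p) (hadd B h' (bh s))))) \<and>
      \<comment> \<open>injectivity on arrows with the same source and target\<close>
      (\<forall>h p q h'. is_arrow B bv h p h' \<and> is_arrow B bv h q h' \<and> cls h p h' \<noteq> cls h q h' \<longrightarrow>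
         KV (cls h p h') \<inter> KV (cls h q h') = {}) \<and>
      \<comment> \<open>injectivity on half-arrows with the same end object\<close>
      (\<forall>x\<in>half_arrows ah bh. \<forall>y\<in>half_arrows ah bh. x \<noteq> y \<and> snd x = snd y \<longrightarrow>
         KH x \<inter> KH y = {}))"

end

theory Submission
  imports Defs "HOL-Library.FuncSet"
begin

text \<open>
  Order the half-arrows by \<open>x \<le> y \<longleftrightarrow> x + y = y\<close>. They form a finite join-semilattice, and
  sending \<open>x\<close> to its up-set \<open>\<up>x\<close> is injective and turns \<open>+\<close> into intersection. So the
  half-arrows are sent to their up-sets in the forest algebra of subsets of the set of half-arrows
  under intersection, whose contexts are the intersection-preserving maps; this algebra is
  distributive by construction. The arrow \<open>e = [h,p,h']\<close> is sent to all such maps \<open>g\<close> with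
  \<open>g (\<up>x) = \<up>(e x)\<close> for the half-arrows \<open>x\<close> ending at \<open>h\<close>. Local distributivity says exactly
  that \<open>x \<mapsto> e x\<close> preserves \<open>+\<close> on these half-arrows, and for such a map a suitable \<open>g\<close> sends
  \<open>U\<close> to the set of \<open>z\<close> such that the greatest \<open>x\<close> with \<open>e x \<le> z\<close> exists and lies in \<open>U\<close>.
  The conditions of a division then follow from identities between half-arrows, injectivity from
  the injectivity of \<open>\<up>\<close>. Finally the finite algebra is copied onto \<open>nat\<close>.
\<close>

lemma
  assumes "forest_algebra A"
  shows hadd_assoc: "x \<in> hcar A \<Longrightarrow> y \<in> hcar A \<Longrightarrow> z \<in> hcar A \<Longrightarrow>
      hadd A (hadd A x y) z = hadd A x (hadd A y z)"
    and hadd_commute: "x \<in> hcar A \<Longrightarrow> y \<in> hcar A \<Longrightarrow> hadd A x y = hadd A y x"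
    and hadd_idem: "x \<in> hcar A \<Longrightarrow> hadd A x x = x"
    and act_closed: "v \<in> vcar A \<Longrightarrow> h \<in> hcar A \<Longrightarrow> act A v h \<in> hcar A"
    and act_vmul: "v \<in> vcar A \<Longrightarrow> w \<in> vcar A \<Longrightarrow> h \<in> hcar A \<Longrightarrow>
      act A (vmul A v w) h = act A v (act A w h)"
    and ins_closed: "h \<in> hcar A \<Longrightarrow> ins A h \<in> vcar A"
    and act_ins: "h \<in> hcar A \<Longrightarrow> h' \<in> hcar A \<Longrightarrow> act A (ins A h) h' = hadd A h h'"
  using assms unfolding forest_algebra_def
  apply -
  apply (elim conjE; (blast | simp))+
  done

lemma
  assumes "free_morphism A fh fv"
  shows free_morphism_hcar: "fh s \<in> hcar A"
    and free_morphism_vcar: "fv p \<in> vcar A"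
    and free_morphism_union: "fh (s |\<union>| t) = hadd A (fh s) (fh t)"
    and free_morphism_ccomp: "fv (ccomp p q) = vmul A (fv p) (fv q)"
    and free_morphism_plug: "fh (plug p s) = act A (fv p) (fh s)"
    and free_morphism_CHole: "fv (CHole s) = ins A (fh s)"
  using assms by (simp_all add: free_morphism_def)

section \<open>Semilattices on a carrier set\<close>

locale semilattice_on =
  fixes S :: "'a set" and f :: "'a \<Rightarrow> 'a \<Rightarrow> 'a"
  assumes closed: "x \<in> S \<Longrightarrow> y \<in> S \<Longrightarrow> f x y \<in> S"
    and assoc: "x \<in> S \<Longrightarrow> y \<in> S \<Longrightarrow> z \<in> S \<Longrightarrow> f (f x y) z = f x (f y z)"
    and commute: "x \<in> S \<Longrightarrow> y \<in> S \<Longrightarrow> f x y = f y x"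
    and idem: "x \<in> S \<Longrightarrow> f x x = x"
begin

definition below :: "'a \<Rightarrow> 'a \<Rightarrow> bool" where
  "below x y \<longleftrightarrow> f x y = y"

definition up :: "'a \<Rightarrow> 'a set" where
  "up x = {z \<in> S. below x z}"

lemma up_subset: "up x \<subseteq> S"
  by (auto simp: up_def)

lemma below_refl: "x \<in> S \<Longrightarrow> below x x"
  by (simp add: below_def idem)

lemma below_antisym: "x \<in> S \<Longrightarrow> y \<in> S \<Longrightarrow> below x y \<Longrightarrow> below y x \<Longrightarrow> x = y"
  by (metis below_def commute)

lemma f_below_iff:
  assumes "x \<in> S" "y \<in> S" "z \<in> S"
  shows "below (f x y) z \<longleftrightarrow> below x z \<and> below y z"
proof
  assume xyz: "below (f x y) z"
  then have "f x z = f x (f (f x y) z)" by (simp add: below_def)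
  also have "\<dots> = f (f x x) (f y z)" using assms by (simp add: assoc closed)
  also have "\<dots> = z" using xyz assms by (simp add: below_def idem assoc)
  finally have "below x z" by (simp add: below_def)
  moreover have "below y z" using xyz assms
    by (metis below_def assoc closed commute \<open>below x z\<close>)
  ultimately show "below x z \<and> below y z" ..
next
  assume "below x z \<and> below y z"
  then show "below (f x y) z" using assms by (simp add: below_def assoc)
qed

lemma below_f: "x \<in> S \<Longrightarrow> y \<in> S \<Longrightarrow> below x (f x y) \<and> below y (f x y)"
  using f_below_iff[of x y "f x y"] by (simp add: below_refl closed)

lemma below_trans: "x \<in> S \<Longrightarrow> y \<in> S \<Longrightarrow> z \<in> S \<Longrightarrow> below x y \<Longrightarrow> below y z \<Longrightarrow> below x z"
  using f_below_iff[of x y z] by (simp add: below_def)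

lemma up_f: "x \<in> S \<Longrightarrow> y \<in> S \<Longrightarrow> up (f x y) = up x \<inter> up y"
  by (auto simp: up_def f_below_iff)

lemma up_inject: "x \<in> S \<Longrightarrow> y \<in> S \<Longrightarrow> up x = up y \<longleftrightarrow> x = y"
  by (auto simp: up_def intro: below_antisym below_refl)

lemma finite_closed_subset_has_greatest:
  assumes "finite C" "C \<noteq> {}" "C \<subseteq> S" and C_closed: "\<And>x y. x \<in> C \<Longrightarrow> y \<in> C \<Longrightarrow> f x y \<in> C"
  shows "\<exists>m\<in>C. \<forall>x\<in>C. below x m"
proof -
  have "\<exists>m\<in>C. \<forall>x\<in>T. below x m" if "finite T" "T \<noteq> {}" "T \<subseteq> C" for T
    using that
  proof (induction T rule: finite_ne_induct)
    case (singleton x)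
    then show ?case using \<open>C \<subseteq> S\<close> by (auto intro: below_refl)
  next
    case (insert x T)
    then obtain m where m: "m \<in> C" "\<forall>y\<in>T. below y m" by auto
    have x: "x \<in> C" using insert.prems by simp
    have "\<forall>y\<in>insert x T. below y (f x m)"
      using m x insert.prems \<open>C \<subseteq> S\<close> below_f below_trans closed by (metis insert_iff subsetD)
    then show ?case using C_closed[OF x m(1)] by blast
  qed
  then show ?thesis using assms(1,2) by blast
qed

end

section \<open>The forest algebra of subsets under intersection\<close>

text \<open>Maps are extensional (\<open>undefined\<close> outside \<open>Pow W\<close>) so that the action is faithful.\<close>

definition meet_maps :: "'w set \<Rightarrow> ('w set \<Rightarrow> 'w set) set" where
  "meet_maps W = {g \<in> Pow W \<rightarrow>\<^sub>E Pow W. \<forall>U\<in>Pow W. \<forall>U'\<in>Pow W. g (U \<inter> U') = g U \<inter> g U'}"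

lemma meet_mapsI:
  assumes "\<And>U. U \<subseteq> W \<Longrightarrow> G U \<subseteq> W"
    and "\<And>U U'. U \<subseteq> W \<Longrightarrow> U' \<subseteq> W \<Longrightarrow> G (U \<inter> U') = G U \<inter> G U'"
  shows "restrict G (Pow W) \<in> meet_maps W"
  using assms by (simp add: meet_maps_def restrict_PiE_iff le_infI1)

lemma meet_mapsD:
  assumes "g \<in> meet_maps W"
  shows "U \<subseteq> W \<Longrightarrow> g U \<subseteq> W" and "U \<notin> Pow W \<Longrightarrow> g U = undefined"
    and "U \<subseteq> W \<Longrightarrow> U' \<subseteq> W \<Longrightarrow> g (U \<inter> U') = g U \<inter> g U'"
proof -
  have g: "g \<in> Pow W \<rightarrow>\<^sub>E Pow W" "\<forall>U\<in>Pow W. \<forall>U'\<in>Pow W. g (U \<inter> U') = g U \<inter> g U'"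
    using assms by (simp_all add: meet_maps_def)
  show "U \<subseteq> W \<Longrightarrow> g U \<subseteq> W" using PiE_mem[OF g(1)] by blast
  show "U \<notin> Pow W \<Longrightarrow> g U = undefined" using PiE_arb[OF g(1)] .
  show "U \<subseteq> W \<Longrightarrow> U' \<subseteq> W \<Longrightarrow> g (U \<inter> U') = g U \<inter> g U'" using g(2) by blast
qed

lemma restrict_inter_meet_maps: "U \<subseteq> W \<Longrightarrow> restrict ((\<inter>) U) (Pow W) \<in> meet_maps W"
  by (rule meet_mapsI) auto

lemma restrict_id_meet_maps: "restrict id (Pow W) \<in> meet_maps W"
  by (rule meet_mapsI) auto

lemma meet_maps_comp:
  assumes "g \<in> meet_maps W" "g' \<in> meet_maps W"
  shows "restrict (g \<circ> g') (Pow W) \<in> meet_maps W"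
  by (rule meet_mapsI) (simp_all add: meet_mapsD(1,3)[OF assms(1)] meet_mapsD(1,3)[OF assms(2)])

lemma meet_maps_ext:
  assumes "g \<in> meet_maps W" "g' \<in> meet_maps W" "\<forall>U\<in>Pow W. g U = g' U"
  shows "g = g'"
proof
  fix U show "g U = g' U"
    using assms meet_mapsD(2)[OF assms(1)] meet_mapsD(2)[OF assms(2)]
    by (cases "U \<in> Pow W") simp_all
qed

definition powerset_algebra :: "'w set \<Rightarrow> ('w set, 'w set \<Rightarrow> 'w set) forest_algebra" where
  "powerset_algebra W =
     \<lparr>hcar = Pow W, vcar = meet_maps W, hadd = (\<inter>), hzero = W,
      vmul = \<lambda>g g'. restrict (g \<circ> g') (Pow W), vone = restrict id (Pow W),
      act = \<lambda>g U. g U, ins = \<lambda>U. restrict ((\<inter>) U) (Pow W)\<rparr>"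

lemma powerset_algebra_simps [simp]:
  "hcar (powerset_algebra W) = Pow W" "vcar (powerset_algebra W) = meet_maps W"
  "hadd (powerset_algebra W) = (\<inter>)" "hzero (powerset_algebra W) = W"
  "vmul (powerset_algebra W) g g' = restrict (g \<circ> g') (Pow W)"
  "vone (powerset_algebra W) = restrict id (Pow W)" "act (powerset_algebra W) g U = g U"
  "ins (powerset_algebra W) U = restrict ((\<inter>) U) (Pow W)"
  by (simp_all add: powerset_algebra_def)

lemma forest_algebra_powerset_algebra: "forest_algebra (powerset_algebra W)"
  unfolding forest_algebra_def powerset_algebra_simps
proof (intro conjI ballI impI)
  fix g g' g'' :: "'a set \<Rightarrow> 'a set" assume "g'' \<in> meet_maps W"
  then show "restrict (restrict (g \<circ> g') (Pow W) \<circ> g'') (Pow W) =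
      restrict (g \<circ> restrict (g' \<circ> g'') (Pow W)) (Pow W)"
    using meet_mapsD(1)[of g'' W] by (intro restrict_ext) auto
next
  fix g assume g: "g \<in> meet_maps W"
  show "restrict (restrict id (Pow W) \<circ> g) (Pow W) = g"
    and "restrict (g \<circ> restrict id (Pow W)) (Pow W) = g"
    using meet_mapsD[OF g] by (auto simp: fun_eq_iff)
next
  fix U assume "U \<in> Pow W"
  then have "U = restrict ((\<inter>) U) (Pow W) W" by auto
  then show "\<exists>g\<in>meet_maps W. U = g W"
    using restrict_inter_meet_maps[of U W] \<open>U \<in> Pow W\<close> by blast
qed (auto simp: meet_maps_comp meet_maps_ext restrict_inter_meet_maps restrict_id_meet_maps
    meet_mapsD(1))

lemma finite_forest_algebra_powerset_algebra:
  assumes "finite W"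
  shows "finite_forest_algebra (powerset_algebra W)"
proof -
  have "meet_maps W \<subseteq> Pow W \<rightarrow>\<^sub>E Pow W"
    by (auto simp: meet_maps_def)
  then have "finite (meet_maps W)"
    using assms by (meson finite_PiE finite_Pow_iff finite_subset)
  then show ?thesis
    using assms forest_algebra_powerset_algebra by (simp add: finite_forest_algebra_def)
qed

lemma distributive_powerset_algebra: "distributive (powerset_algebra W)"
  unfolding distributive_def powerset_algebra_simps using meet_mapsD(3) by blast

lemma (in semilattice_on) join_hom_extends_to_meet_map:
  assumes "finite S" and D: "D \<subseteq> S" "\<And>x y. x \<in> D \<Longrightarrow> y \<in> D \<Longrightarrow> f x y \<in> D"
    and E: "\<And>x. x \<in> D \<Longrightarrow> E x \<in> S" "\<And>x y. x \<in> D \<Longrightarrow> y \<in> D \<Longrightarrow> E (f x y) = f (E x) (E y)"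
  shows "\<exists>g\<in>meet_maps S. \<forall>x\<in>D. g (up x) = up (E x)"
proof -
  define lower where "lower z = {x \<in> D. below (E x) z}" for z
  define greatest where "greatest z m \<longleftrightarrow> m \<in> lower z \<and> (\<forall>y\<in>lower z. below y m)" for z m
  define g where "g = restrict (\<lambda>U. {z \<in> S. \<exists>m\<in>U. greatest z m}) (Pow S)"
  have E_mono: "below (E x) (E y)" if "x \<in> D" "y \<in> D" "below x y" for x y
    using that E(2) by (metis below_def)
  have greatest_unique: "m = m'" if "greatest z m" "greatest z m'" for z m m'
  proof (rule below_antisym)
    show "m \<in> S" "m' \<in> S" using that D(1) by (auto simp: greatest_def lower_def)
    show "below m m'" "below m' m" using that by (auto simp: greatest_def)
  qed
  have greatest_exists: "\<exists>m. greatest z m" if "z \<in> S" "x \<in> lower z" for z x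
  proof -
    have "lower z \<subseteq> S" using D(1) by (auto simp: lower_def)
    moreover have "f x y \<in> lower z" if "x \<in> lower z" "y \<in> lower z" for x y
      using that D E \<open>z \<in> S\<close> f_below_iff by (simp add: lower_def)
    ultimately show ?thesis
      using finite_closed_subset_has_greatest[of "lower z"] finite_subset[OF _ \<open>finite S\<close>]
        \<open>x \<in> lower z\<close>
      by (auto simp: greatest_def)
  qed
  have "g \<in> meet_maps S"
    unfolding g_def using greatest_unique by (intro meet_mapsI) auto
  moreover have "g (up x) = up (E x)" if x: "x \<in> D" for x
  proof
    show "g (up x) \<subseteq> up (E x)"
    proof
      fix z assume "z \<in> g (up x)"
      then obtain m where z: "z \<in> S" and m: "greatest z m" "below x m" "m \<in> D"
        using up_subset by (auto simp: g_def greatest_def lower_def up_def)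
      have "below (E x) (E m)" using E_mono x m by blast
      then show "z \<in> up (E x)"
        using m z x E(1) below_trans[of "E x" "E m" z] by (auto simp: up_def greatest_def lower_def)
    qed
    show "up (E x) \<subseteq> g (up x)"
    proof
      fix z assume "z \<in> up (E x)"
      then have z: "z \<in> S" and "x \<in> lower z" using x by (auto simp: up_def lower_def)
      then obtain m where "greatest z m" using greatest_exists by blast
      then show "z \<in> g (up x)"
        using z \<open>x \<in> lower z\<close> D(1) up_subset by (auto simp: g_def greatest_def lower_def up_def)
    qed
  qed
  ultimately show ?thesis by blast
qed

section \<open>Embeddings of forest algebras\<close>

definition forest_algebra_embedding ::
  "('h, 'v) forest_algebra \<Rightarrow> ('h', 'v') forest_algebra \<Rightarrow> ('h \<Rightarrow> 'h') \<Rightarrow> ('v \<Rightarrow> 'v') \<Rightarrow> bool" where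
  "forest_algebra_embedding G F \<phi> \<psi> \<longleftrightarrow>
     inj_on \<phi> (hcar G) \<and> inj_on \<psi> (vcar G) \<and> \<phi> ` hcar G \<subseteq> hcar F \<and> \<psi> ` vcar G \<subseteq> vcar F \<and>
     (\<forall>x\<in>hcar G. \<forall>y\<in>hcar G. \<phi> (hadd G x y) = hadd F (\<phi> x) (\<phi> y)) \<and>
     (\<forall>v\<in>vcar G. \<forall>w\<in>vcar G. \<psi> (vmul G v w) = vmul F (\<psi> v) (\<psi> w)) \<and>
     (\<forall>v\<in>vcar G. \<forall>x\<in>hcar G. \<phi> (act G v x) = act F (\<psi> v) (\<phi> x)) \<and>
     (\<forall>x\<in>hcar G. \<psi> (ins G x) = ins F (\<phi> x))"

lemma image_closed_under:
  assumes "\<forall>a\<in>X. \<forall>b\<in>Y. f a b \<in> Z" "X \<subseteq> C" "Y \<subseteq> D"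
    and "\<And>a b. a \<in> C \<Longrightarrow> b \<in> D \<Longrightarrow> f' (i a) (j b) = k (f a b)"
  shows "\<forall>a\<in>i ` X. \<forall>b\<in>j ` Y. f' a b \<in> k ` Z"
  using assms by fastforce

lemma derived_divides_embedding:
  assumes G: "forest_algebra G" and emb: "forest_algebra_embedding G F \<phi> \<psi>"
    and "derived_divides A B ah av bh bv G"
  shows "derived_divides A B ah av bh bv F"
proof -
  note hom = emb[unfolded forest_algebra_embedding_def]
  have vmul: "\<forall>a\<in>\<psi> ` X. \<forall>b\<in>\<psi> ` Y. vmul F a b \<in> \<psi> ` Z"
    if "\<forall>a\<in>X. \<forall>b\<in>Y. vmul G a b \<in> Z" "X \<subseteq> vcar G" "Y \<subseteq> vcar G" for X Y Z
    by (rule image_closed_under[OF that]) (use hom in simp)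
  have act: "\<forall>a\<in>\<psi> ` X. \<forall>b\<in>\<phi> ` Y. act F a b \<in> \<phi> ` Z"
    if "\<forall>a\<in>X. \<forall>b\<in>Y. act G a b \<in> Z" "X \<subseteq> vcar G" "Y \<subseteq> hcar G" for X Y Z
    by (rule image_closed_under[OF that]) (use hom in simp)
  have hadd: "\<forall>a\<in>\<phi> ` X. \<forall>b\<in>\<phi> ` Y. hadd F a b \<in> \<phi> ` Z"
    if "\<forall>a\<in>X. \<forall>b\<in>Y. hadd G a b \<in> Z" "X \<subseteq> hcar G" "Y \<subseteq> hcar G" for X Y Z
    by (rule image_closed_under[OF that]) (use hom in simp)
  have hvadd: "\<forall>a\<in>\<phi> ` X. \<forall>b\<in>\<psi> ` Y. hvadd F a b \<in> \<psi> ` Z"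
    if "\<forall>a\<in>X. \<forall>b\<in>Y. hvadd G a b \<in> Z" "X \<subseteq> hcar G" "Y \<subseteq> vcar G" for X Y Z
    by (rule image_closed_under[OF that]) (use hom ins_closed[OF G] in \<open>simp add: hvadd_def\<close>)
  have vhadd: "\<forall>a\<in>\<phi> ` X. \<forall>b\<in>\<psi> ` Y. vhadd F b a \<in> \<psi> ` Z"
    if "\<forall>a\<in>X. \<forall>b\<in>Y. vhadd G b a \<in> Z" "X \<subseteq> hcar G" "Y \<subseteq> vcar G" for X Y Z
    by (rule image_closed_under[OF that]) (use hom ins_closed[OF G] in \<open>simp add: vhadd_def\<close>)
  have img: "\<phi> ` hcar G \<subseteq> hcar F" "\<psi> ` vcar G \<subseteq> vcar F"
    and inj: "inj_on \<phi> (hcar G)" "inj_on \<psi> (vcar G)"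
    using hom by simp_all
  have half_arrow: "(ah s, bh s) \<in> half_arrows ah bh" for s
    by (simp add: half_arrows_def)
  from assms(3) show ?thesis
    unfolding derived_divides_def Let_def
    apply (elim exE conjE)
    subgoal premises K for KH KV
      \<comment> \<open>\<open>K(1)\<close>, ..., \<open>K(9)\<close> are the conditions of \<open>derived_divides_def\<close> in order\<close>
      apply (intro exI[of _ "\<lambda>x. \<phi> ` KH x"] exI[of _ "\<lambda>c. \<psi> ` KV c"] conjI)
      subgoal using K(1) img(1) by (metis image_is_empty image_mono order_trans)
      subgoal using K(2) img(2) by (metis image_is_empty image_mono order_trans)
      subgoal using K(3) K(2) by (intro allI impI vmul) blast+
      subgoal using K(4) K(1,2) by (intro allI impI ballI act) blast+
      subgoal by (rule ballI, rule ballI, rule hadd) (use K(5) K(1) in blast)+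
      subgoal using K(6) K(1,2) half_arrow by (intro allI impI hvadd) blast+
      subgoal using K(7) K(1,2) half_arrow by (intro allI impI vhadd) blast+
      subgoal using K(8) K(2) by (simp add: inj_on_image_Int[OF inj(2), symmetric])
      subgoal using K(9) K(1) by (simp add: inj_on_image_Int[OF inj(1), symmetric])
      done
    done
qed

definition transfer_algebra ::
  "('h \<Rightarrow> 'h') \<Rightarrow> ('v \<Rightarrow> 'v') \<Rightarrow> ('h, 'v) forest_algebra \<Rightarrow> ('h', 'v') forest_algebra" where
  "transfer_algebra \<phi> \<psi> G =
     \<lparr>hcar = \<phi> ` hcar G, vcar = \<psi> ` vcar G,
      hadd = \<lambda>a b. \<phi> (hadd G (inv_into (hcar G) \<phi> a) (inv_into (hcar G) \<phi> b)), hzero = \<phi> (hzero G),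
      vmul = \<lambda>v w. \<psi> (vmul G (inv_into (vcar G) \<psi> v) (inv_into (vcar G) \<psi> w)), vone = \<psi> (vone G),
      act = \<lambda>v a. \<phi> (act G (inv_into (vcar G) \<psi> v) (inv_into (hcar G) \<phi> a)),
      ins = \<lambda>a. \<psi> (ins G (inv_into (hcar G) \<phi> a))\<rparr>"

context
  fixes G :: "('h, 'v) forest_algebra" and \<phi> :: "'h \<Rightarrow> 'h'" and \<psi> :: "'v \<Rightarrow> 'v'"
  assumes inj: "inj_on \<phi> (hcar G)" "inj_on \<psi> (vcar G)"
begin

lemma transfer_algebra_simps [simp]:
  "hcar (transfer_algebra \<phi> \<psi> G) = \<phi> ` hcar G" "vcar (transfer_algebra \<phi> \<psi> G) = \<psi> ` vcar G"
  "x \<in> hcar G \<Longrightarrow> y \<in> hcar G \<Longrightarrow> hadd (transfer_algebra \<phi> \<psi> G) (\<phi> x) (\<phi> y) = \<phi> (hadd G x y)"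
  "hzero (transfer_algebra \<phi> \<psi> G) = \<phi> (hzero G)"
  "v \<in> vcar G \<Longrightarrow> w \<in> vcar G \<Longrightarrow> vmul (transfer_algebra \<phi> \<psi> G) (\<psi> v) (\<psi> w) = \<psi> (vmul G v w)"
  "vone (transfer_algebra \<phi> \<psi> G) = \<psi> (vone G)"
  "v \<in> vcar G \<Longrightarrow> x \<in> hcar G \<Longrightarrow> act (transfer_algebra \<phi> \<psi> G) (\<psi> v) (\<phi> x) = \<phi> (act G v x)"
  "x \<in> hcar G \<Longrightarrow> ins (transfer_algebra \<phi> \<psi> G) (\<phi> x) = \<psi> (ins G x)"
  using inj by (simp_all add: transfer_algebra_def)

lemma forest_algebra_embedding_transfer_algebra:
  "forest_algebra_embedding G (transfer_algebra \<phi> \<psi> G) \<phi> \<psi>"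
  using inj by (simp add: forest_algebra_embedding_def)

lemma forest_algebra_transfer_algebra:
  "forest_algebra G \<Longrightarrow> forest_algebra (transfer_algebra \<phi> \<psi> G)"
  unfolding forest_algebra_def by (auto simp: inj_on_eq_iff[OF inj(1)] inj_on_eq_iff[OF inj(2)])

lemma distributive_transfer_algebra:
  "forest_algebra G \<Longrightarrow> distributive G \<Longrightarrow> distributive (transfer_algebra \<phi> \<psi> G)"
  unfolding forest_algebra_def by (auto simp: distributive_def)

lemma finite_forest_algebra_transfer_algebra:
  "finite_forest_algebra G \<Longrightarrow> finite_forest_algebra (transfer_algebra \<phi> \<psi> G)"
  by (simp add: finite_forest_algebra_def forest_algebra_transfer_algebra)

end

lemma derived_divides_nat_algebra:
  fixes G :: "('h, 'v) forest_algebra"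
  assumes "finite_forest_algebra G" "distributive G" "derived_divides A B ah av bh bv G"
  shows "\<exists>F :: (nat, nat) forest_algebra.
    finite_forest_algebra F \<and> distributive F \<and> derived_divides A B ah av bh bv F"
proof -
  have G: "forest_algebra G" and "finite (hcar G)" "finite (vcar G)"
    using assms(1) by (simp_all add: finite_forest_algebra_def)
  then obtain \<phi> :: "'h \<Rightarrow> nat" and \<psi> :: "'v \<Rightarrow> nat" where "inj_on \<phi> (hcar G)" "inj_on \<psi> (vcar G)"
    by (meson finite_imp_inj_to_nat_seg)
  then show ?thesis
    using assms G by (meson derived_divides_embedding distributive_transfer_algebra
        finite_forest_algebra_transfer_algebra forest_algebra_embedding_transfer_algebra)
qed

section \<open>The derived forest category\<close>

lemma arrow_class_cong:
  "arrow_equiv ah bh h p q \<Longrightarrow> arrow_class ah B bh bv h p h' = arrow_class ah B bh bv h q h'"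
  by (auto simp: arrow_class_def arrow_equiv_def)

locale derived_category =
  fixes A :: "('h1, 'v1) forest_algebra" and B :: "('h2, 'v2) forest_algebra"
    and ah :: "'a forest \<Rightarrow> 'h1" and av :: "'a ctx \<Rightarrow> 'v1"
    and bh :: "'a forest \<Rightarrow> 'h2" and bv :: "'a ctx \<Rightarrow> 'v2"
  assumes A: "forest_algebra A" and B: "forest_algebra B"
    and alpha: "free_morphism A ah av" and beta: "free_morphism B bh bv"
begin

abbreviation HA :: "('h1 \<times> 'h2) set" where
  "HA \<equiv> half_arrows ah bh"

lemmas morphism_simps =
  free_morphism_hcar[OF alpha] free_morphism_vcar[OF alpha] free_morphism_union[OF alpha]
  free_morphism_ccomp[OF alpha] free_morphism_plug[OF alpha] free_morphism_CHole[OF alpha]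
  free_morphism_hcar[OF beta] free_morphism_vcar[OF beta] free_morphism_union[OF beta]
  free_morphism_ccomp[OF beta] free_morphism_plug[OF beta] free_morphism_CHole[OF beta]

lemma half_arrowI [simp]: "(ah s, bh s) \<in> HA"
  by (simp add: half_arrows_def)

lemma half_arrowE:
  assumes "x \<in> HA"
  obtains s where "x = (ah s, bh s)"
  using assms by (auto simp: half_arrows_def)

lemma finite_half_arrows: "finite (hcar A) \<Longrightarrow> finite (hcar B) \<Longrightarrow> finite HA"
  by (auto simp: half_arrows_def morphism_simps intro: finite_subset[of _ "hcar A \<times> hcar B"])

lemma half_sum_half_arrows: "half_sum A B (ah s, bh s) (ah t, bh t) = (ah (s |\<union>| t), bh (s |\<union>| t))"
  by (simp add: half_sum_def morphism_simps)

sublocale H: semilattice_on HA "half_sum A B"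
proof unfold_locales
  fix x y z assume "x \<in> HA" "y \<in> HA" "z \<in> HA"
  then obtain s t u where xyz: "x = (ah s, bh s)" "y = (ah t, bh t)" "z = (ah u, bh u)"
    by (metis half_arrowE)
  show "half_sum A B x y \<in> HA"
    using xyz by (simp add: half_sum_half_arrows)
  show "half_sum A B (half_sum A B x y) z = half_sum A B x (half_sum A B y z)"
    and "half_sum A B x y = half_sum A B y x" and "half_sum A B x x = x"
    using xyz by (simp_all add: half_sum_def morphism_simps hadd_assoc[OF A] hadd_assoc[OF B]
        hadd_commute[OF A] hadd_commute[OF B] hadd_idem[OF A] hadd_idem[OF B])
qed

lemma arrow_act_half_arrow:
  assumes "bh s = h" "is_arrow B bv h p h'"
  shows "arrow_act A av h p h' (ah s, bh s) = (ah (plug p s), bh (plug p s))"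
  using assms by (simp add: arrow_act_def is_arrow_def morphism_simps)

lemma arrow_act_in_half_arrows:
  assumes "x \<in> HA" "snd x = h" "is_arrow B bv h p h'"
  shows "arrow_act A av h p h' x \<in> HA"
  using assms by (auto elim!: half_arrowE simp: arrow_act_half_arrow)

lemma arrow_act_arrow_equiv:
  assumes "arrow_equiv ah bh h p q" "x \<in> HA" "snd x = h"
  shows "arrow_act A av h p h' x = arrow_act A av h q h' x"
  using assms
  by (auto elim!: half_arrowE simp: arrow_act_def arrow_equiv_def free_morphism_plug[OF alpha, symmetric])

lemma is_arrow_ccomp:
  assumes "is_arrow B bv h2 p h3" "is_arrow B bv h1 q h2"
  shows "is_arrow B bv h1 (ccomp p q) h3"
  using assms by (simp add: is_arrow_def morphism_simps act_vmul[OF B])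

lemma arrow_act_ccomp:
  assumes "x \<in> HA"
  shows "arrow_act A av h2 p h3 (arrow_act A av h1 q h2 x) = arrow_act A av h1 (ccomp p q) h3 x"
  using assms by (auto elim!: half_arrowE simp: arrow_act_def morphism_simps act_vmul[OF A])

lemma is_arrow_hadd_commute:
  "is_arrow B bv h p h' \<Longrightarrow> hadd B h' (bh s) = hadd B (bh s) h'"
  by (auto simp: is_arrow_def morphism_simps hadd_commute[OF B] act_closed[OF B])

lemma cadd_eq_ccomp: "cadd s p = ccomp (CHole s) p"
  by simp

lemma is_arrow_cadd:
  assumes "is_arrow B bv h p h'"
  shows "is_arrow B bv h (cadd s p) (hadd B (bh s) h')"
  using assms unfolding is_arrow_def
  by (auto simp: cadd_eq_ccomp morphism_simps act_vmul[OF B] act_ins[OF B] ins_closed[OF B]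
      act_closed[OF B] simp del: ccomp.simps)

lemma arrow_act_cadd:
  assumes "x \<in> HA"
  shows "half_sum A B (ah s, bh s) (arrow_act A av h p h' x) =
    arrow_act A av h (cadd s p) (hadd B (bh s) h') x"
  using assms
  by (auto elim!: half_arrowE simp: half_sum_def arrow_act_def cadd_eq_ccomp morphism_simps
      act_vmul[OF A] act_ins[OF A] ins_closed[OF A] act_closed[OF A] simp del: ccomp.simps)

definition arrow_maps :: "'h2 \<Rightarrow> 'a ctx \<Rightarrow> 'h2 \<Rightarrow> (('h1 \<times> 'h2) set \<Rightarrow> ('h1 \<times> 'h2) set) set" where
  "arrow_maps h p h' = {g \<in> meet_maps HA.
     \<forall>x\<in>HA. snd x = h \<longrightarrow> g (H.up x) = H.up (arrow_act A av h p h' x)}"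

text \<open>The set \<open>K\<^sub>e\<close> of the division, for an arrow \<open>e\<close> given as its class of triples.\<close>

definition class_maps :: "('h2 \<times> 'a ctx \<times> 'h2) set \<Rightarrow> (('h1 \<times> 'h2) set \<Rightarrow> ('h1 \<times> 'h2) set) set" where
  "class_maps c = (\<Inter>(h, p, h')\<in>c. arrow_maps h p h')"

lemma class_maps_arrow_class:
  assumes "is_arrow B bv h p h'"
  shows "class_maps (arrow_class ah B bh bv h p h') = arrow_maps h p h'"
proof -
  have "arrow_maps h q h' = arrow_maps h p h'" if "arrow_equiv ah bh h p q" for q
    using arrow_act_arrow_equiv[OF that] by (auto simp: arrow_maps_def)
  moreover have "(h, p, h') \<in> arrow_class ah B bh bv h p h'"
    using assms by (simp add: arrow_class_def arrow_equiv_def)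
  ultimately show ?thesis
    unfolding class_maps_def arrow_class_def by blast
qed

lemma arrow_maps_nonempty:
  assumes "finite HA" "locally_distributive A B ah av bh bv" and arrow: "is_arrow B bv h p h'"
  shows "arrow_maps h p h' \<noteq> {}"
proof -
  let ?D = "{x \<in> HA. snd x = h}"
  have "h \<in> hcar B" using arrow by (simp add: is_arrow_def)
  then have "half_sum A B x y \<in> ?D" if "x \<in> ?D" "y \<in> ?D" for x y
    using that H.closed[of x y] hadd_idem[OF B] by (simp add: half_sum_def)
  moreover have "arrow_act A av h p h' (half_sum A B x y) =
      half_sum A B (arrow_act A av h p h' x) (arrow_act A av h p h' y)" if "x \<in> ?D" "y \<in> ?D" for x y
    using that assms(2) arrow unfolding locally_distributive_def is_arrow_def by blast
  ultimately obtain g where "g \<in> meet_maps HA" "\<forall>x\<in>?D. g (H.up x) = H.up (arrow_act A av h p h' x)"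
    using H.join_hom_extends_to_meet_map[OF assms(1), of ?D "arrow_act A av h p h'"]
      arrow_act_in_half_arrows[OF _ _ arrow] by blast
  then show ?thesis by (auto simp: arrow_maps_def)
qed

lemma arrow_maps_comp:
  assumes "is_arrow B bv h2 p h3" "is_arrow B bv h1 q h2"
    and "g \<in> arrow_maps h2 p h3" "g' \<in> arrow_maps h1 q h2"
  shows "vmul (powerset_algebra HA) g g' \<in> arrow_maps h1 (ccomp p q) h3"
proof -
  have "g (g' (H.up x)) = H.up (arrow_act A av h1 (ccomp p q) h3 x)" if "x \<in> HA" "snd x = h1" for x
  proof -
    have "g' (H.up x) = H.up (arrow_act A av h1 q h2 x)"
      using assms(4) that by (simp add: arrow_maps_def)
    moreover have "arrow_act A av h1 q h2 x \<in> HA" "snd (arrow_act A av h1 q h2 x) = h2"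
      using arrow_act_in_half_arrows[OF that assms(2)] by (simp_all add: arrow_act_def)
    ultimately show ?thesis
      using assms(3) arrow_act_ccomp[OF that(1)] by (simp add: arrow_maps_def)
  qed
  then show ?thesis
    using assms(3,4) H.up_subset by (simp add: arrow_maps_def meet_maps_comp)
qed

lemma arrow_maps_cadd:
  assumes "is_arrow B bv h p h'" "g \<in> arrow_maps h p h'"
  shows "vmul (powerset_algebra HA) (ins (powerset_algebra HA) (H.up (ah s, bh s))) g
    \<in> arrow_maps h (cadd s p) (hadd B (bh s) h')"
proof -
  have "H.up (ah s, bh s) \<inter> g (H.up x) = H.up (arrow_act A av h (cadd s p) (hadd B (bh s) h') x)"
    if "x \<in> HA" "snd x = h" for x
    using assms(2) that H.up_f[OF half_arrowI arrow_act_in_half_arrows[OF that assms(1)]]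
      arrow_act_cadd[OF that(1)] by (simp add: arrow_maps_def)
  then show ?thesis
    using assms(2) H.up_subset meet_mapsD(1)
    by (simp add: arrow_maps_def meet_maps_comp restrict_inter_meet_maps)
qed

lemma arrow_maps_disjoint:
  assumes "is_arrow B bv h p h'" "is_arrow B bv h q h'" "\<not> arrow_equiv ah bh h p q"
  shows "arrow_maps h p h' \<inter> arrow_maps h q h' = {}"
proof (rule ccontr)
  assume "arrow_maps h p h' \<inter> arrow_maps h q h' \<noteq> {}"
  then obtain g where "g \<in> arrow_maps h p h'" "g \<in> arrow_maps h q h'" by blast
  obtain s where s: "bh s = h" "ah (plug p s) \<noteq> ah (plug q s)"
    using assms(3) by (auto simp: arrow_equiv_def)
  define x where "x = (ah s, bh s)"
  have x: "x \<in> HA" "snd x = h" by (simp add: x_def) (simp add: x_def s(1))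
  then have "H.up (arrow_act A av h p h' x) = H.up (arrow_act A av h q h' x)"
    using \<open>g \<in> arrow_maps h p h'\<close> \<open>g \<in> arrow_maps h q h'\<close> by (simp add: arrow_maps_def)
  then have "arrow_act A av h p h' x = arrow_act A av h q h' x"
    using H.up_inject arrow_act_in_half_arrows[OF x] assms(1,2) by simp
  then show False
    using s(2) by (simp add: x_def arrow_act_def free_morphism_plug[OF alpha])
qed

lemma arrow_maps_up:
  "g \<in> arrow_maps h p h' \<Longrightarrow> x \<in> HA \<Longrightarrow> snd x = h \<Longrightarrow> g (H.up x) = H.up (arrow_act A av h p h' x)"
  by (simp add: arrow_maps_def)

lemma derived_divides_powerset_algebra:
  assumes "finite HA" and "locally_distributive A B ah av bh bv"
  shows "derived_divides A B ah av bh bv (powerset_algebra HA)"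
proof -
  let ?P = "powerset_algebra HA" and ?cls = "arrow_class ah B bh bv"
  have nonempty: "class_maps (?cls h p h') \<noteq> {} \<and> class_maps (?cls h p h') \<subseteq> vcar ?P"
    if "is_arrow B bv h p h'" for h p h'
    using that arrow_maps_nonempty[OF assms that]
    by (auto simp: class_maps_arrow_class arrow_maps_def)
  have comp: "vmul ?P f e \<in> class_maps (?cls h1 (ccomp p q) h3)"
    if "is_arrow B bv h2 p h3" "is_arrow B bv h1 q h2"
      "f \<in> class_maps (?cls h2 p h3)" "e \<in> class_maps (?cls h1 q h2)" for h1 h2 h3 p q f e
    using that arrow_maps_comp by (simp add: class_maps_arrow_class is_arrow_ccomp)
  have act: "act ?P g (H.up x) \<in> {H.up (arrow_act A av (snd x) p h' x)}"
    if "x \<in> HA" "is_arrow B bv (snd x) p h'" "g \<in> class_maps (?cls (snd x) p h')" for x p h' g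
    using that by (simp add: class_maps_arrow_class arrow_maps_up)
  have add: "hadd ?P (H.up x) (H.up y) \<in> {H.up (half_sum A B x y)}"
    if "x \<in> HA" "y \<in> HA" for x y
    using that by (simp add: H.up_f)
  have left_add:
    "hvadd ?P (H.up (ah s, bh s)) g \<in> class_maps (?cls h (cadd s p) (hadd B (bh s) h'))"
    if "is_arrow B bv h p h'" "g \<in> class_maps (?cls h p h')" for s h p h' g
    using that arrow_maps_cadd by (simp add: hvadd_def class_maps_arrow_class is_arrow_cadd)
  then have right_add:
    "vhadd ?P g (H.up (ah s, bh s)) \<in> class_maps (?cls h (cadd s p) (hadd B h' (bh s)))"
    if "is_arrow B bv h p h'" "g \<in> class_maps (?cls h p h')" for s h p h' g
    using that is_arrow_hadd_commute by (simp add: hvadd_def vhadd_def)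
  have disjoint: "class_maps (?cls h p h') \<inter> class_maps (?cls h q h') = {}"
    if "is_arrow B bv h p h'" "is_arrow B bv h q h'" "?cls h p h' \<noteq> ?cls h q h'" for h p q h'
    using that arrow_maps_disjoint arrow_class_cong by (metis class_maps_arrow_class)
  show ?thesis
    unfolding derived_divides_def Let_def
    apply (intro exI[of _ "\<lambda>x. {H.up x}"] exI[of _ class_maps] conjI)
    subgoal using H.up_subset by simp
    subgoal using nonempty by blast
    subgoal using comp by blast
    subgoal using act by blast
    subgoal using add by blast
    subgoal using left_add by blast
    subgoal using right_add by blast
    subgoal using disjoint by blast
    subgoal using H.up_inject by auto
    done
qed

end

theorem mainTheorem5:
  fixes A :: "('h1, 'v1) forest_algebra" and B :: "('h2, 'v2) forest_algebra"
    and ah :: "'a::finite forest \<Rightarrow> 'h1" and av :: "'a ctx \<Rightarrow> 'v1"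
    and bh :: "'a forest \<Rightarrow> 'h2" and bv :: "'a ctx \<Rightarrow> 'v2"
  assumes "finite_forest_algebra A" and "finite_forest_algebra B"
    and "surj_free_morphism A ah av" and "surj_free_morphism B bh bv"
    and "locally_distributive A B ah av bh bv"
  shows "\<exists>F :: (nat, nat) forest_algebra.
           finite_forest_algebra F \<and> distributive F \<and> derived_divides A B ah av bh bv F"
proof -
  interpret derived_category A B ah av bh bv
    using assms(1-4)
    by unfold_locales (simp_all add: finite_forest_algebra_def surj_free_morphism_def)
  have "finite (half_arrows ah bh)"
    using assms(1,2) by (simp add: finite_forest_algebra_def finite_half_arrows)
  then show ?thesis
    using derived_divides_nat_algebra finite_forest_algebra_powerset_algebra
      distributive_powerset_algebra derived_divides_powerset_algebra assms(5) by blast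
qed

end
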